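(* Fix $n\in\mathbb N$. For integers $k$ with $1\le |k|\le n$ let $$p_{nk}=\frac{(-1)^{k+1}(n!)^2}{k\,(n+k)!\,(n-k)!},$$ and let $p_{n0}=0$. (Equivalently, $p_{nk}=\pi_{nk}'(0)$ for $|k|\le n$, where $\pi_{nk}$ is the Lagrange basis polynomial of degree $2n$ for the nodes $-n,\dots,n$, i.e. the unique polynomial of degree $2n$ with $\pi_{nk}(j)=\delta_{kj}$ for all integers $|j|\le n$.) Then: (i) the sequence $\bigl((-1)^{k+1}p_{nk}\bigr)_{1\le k\le n}$ is positive and monotone decreasing, and $p_{n,-k}=-p_{nk}$ for $1\le k\le n$; (ii) for integers $0\le j\le 2n$ (with the convention $0^0=1$), $$\sum_{k=-n}^n p_{nk}k^j=\begin{cases}1,& j=1,\\ 0,& j=0\text{ or }2\le j\le 2n;\end{cases}$$ (iii) $\displaystyle\sum_{k=1}^n|p_{nk}|=\frac{H_n}{2}$ and $\displaystyle\sum_{k=1}^n p_{nk}=H_{2n}-H_n$, where $H_n=\sum_{k=1}^n k^{-1}$ is the $n$-th harmonic number. *)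

theory Defs
  imports "HOL-Analysis.Analysis"
begin

text \<open>The coefficients p_{nk} for integers k with |k| \<le> n (p_{n0} = 0).
  For |k| > n the value is irrelevant; we set it to 0.\<close>
definition p :: "nat \<Rightarrow> int \<Rightarrow> real" where
  "p n k = (if k = 0 \<or> \<bar>k\<bar> > int n then 0
            else (-1) ^ nat \<bar>k + 1\<bar> * (fact n)^2 /
                 (real_of_int k * fact (nat (int n + k)) * fact (nat (int n - k))))"

end

theory Submission
  imports Defs
begin

(* With binom_ratio n k = (n!)^2 / ((n+k)! (n-k)!) = C(2n, n+k) / C(2n, n) one has
   p n k = (-1)^(k+1) binom_ratio n k / k for 1 <= k <= n, and (i) follows from
   binom_ratio n (k+1) (n+k+1) = (n-k) binom_ratio n k.
   Substituting k = i - n, the j-th moment (j >= 1) becomes a multiple of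
   sum_i (-1)^i C(2n,i) (i-n)^(j-1), the 2n-th finite difference of a polynomial of degree < 2n,
   which vanishes; the term i = n, absent from the moment sum, accounts for the value 1 at j = 1.
   For (iii), binom_ratio (n+1) k ((n+1)^2 - k^2) = (n+1)^2 binom_ratio n k gives an induction on n
   whose increments come from the closed forms sum_k k binom_ratio N k = N/2 and
   sum_k (-1)^(k+1) k binom_ratio N k = N / (2(2N-1)). *)

lemma sum_alternating_binomial_Suc:
  fixes f :: "nat \<Rightarrow> 'a :: comm_ring_1"
  shows "(\<Sum>i\<le>Suc N. (-1)^i * of_nat (Suc N choose i) * f i)
       = (\<Sum>i\<le>N. (-1)^i * of_nat (N choose i) * (f i - f (Suc i)))"
proof -
  have shift: "(\<Sum>i\<le>Suc N. (-1)^i * of_nat (Suc N choose i) * f i)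
      = f 0 + (\<Sum>i\<le>N. (-1)^(Suc i) * of_nat (N choose i) * f (Suc i))
      + (\<Sum>i\<le>N. (-1)^(Suc i) * of_nat (N choose Suc i) * f (Suc i))"
    by (subst sum.atMost_Suc_shift) (simp add: sum.distrib[symmetric] algebra_simps)
  have "f 0 + (\<Sum>i\<le>N. (-1)^(Suc i) * of_nat (N choose Suc i) * f (Suc i))
      = (\<Sum>i\<le>Suc N. (-1)^i * of_nat (N choose i) * f i)"
    by (subst sum.atMost_Suc_shift) simp
  also have "\<dots> = (\<Sum>i\<le>N. (-1)^i * of_nat (N choose i) * f i)"
    by (simp add: binomial_eq_0)
  finally show ?thesis
    unfolding shift by (simp add: right_diff_distrib sum_subtractf sum_negf mult_ac)
qed

lemma sum_alternating_binomial_power: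
  fixes x :: "'a :: comm_ring_1"
  assumes "m < N"
  shows "(\<Sum>i\<le>N. (-1)^i * of_nat (N choose i) * (x + of_nat i)^m) = 0"
  using assms
proof (induction N arbitrary: m x)
  case 0 then show ?case by simp
next
  case (Suc N)
  have diff: "(x + of_nat i)^m - (x + of_nat (Suc i))^m
      = - (\<Sum>l<m. of_nat (m choose l) * (x + of_nat i)^l)" for i
  proof -
    have "(x + of_nat (Suc i))^m = (\<Sum>l\<le>m. of_nat (m choose l) * (x + of_nat i)^l)"
      using binomial_ring[of "x + of_nat i" 1 m] by (simp add: algebra_simps)
    also have "\<dots> = (\<Sum>l<m. of_nat (m choose l) * (x + of_nat i)^l) + (x + of_nat i)^m"
      by (simp add: lessThan_Suc_atMost[symmetric])
    finally show ?thesis by simp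
  qed
  have "(\<Sum>i\<le>Suc N. (-1)^i * of_nat (Suc N choose i) * (x + of_nat i)^m)
      = - (\<Sum>i\<le>N. \<Sum>l<m. of_nat (m choose l) * ((-1)^i * of_nat (N choose i) * (x + of_nat i)^l))"
    by (simp only: sum_alternating_binomial_Suc diff sum_distrib_left sum_negf[symmetric])
       (simp add: algebra_simps)
  also have "\<dots> = - (\<Sum>l<m. of_nat (m choose l) * (\<Sum>i\<le>N. (-1)^i * of_nat (N choose i) * (x + of_nat i)^l))"
    by (subst sum.swap) (simp add: sum_distrib_left)
  also have "\<dots> = 0"
    using Suc by simp
  finally show ?case .
qed

definition binom_ratio :: "nat \<Rightarrow> nat \<Rightarrow> real" where
  "binom_ratio n k = fact n ^ 2 / (fact (n + k) * fact (n - k))"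

lemma binom_ratio_0 [simp]: "binom_ratio n 0 = 1"
  by (simp add: binom_ratio_def power2_eq_square)

lemma binom_ratio_pos: "binom_ratio n k > 0"
  by (simp add: binom_ratio_def)

lemma binom_ratio_Suc:
  assumes "k < n"
  shows "binom_ratio n (Suc k) * (real n + real k + 1) = (real n - real k) * binom_ratio n k"
proof -
  have upper: "(fact (n + Suc k) :: real) = (real n + real k + 1) * fact (n + k)"
    by (simp add: algebra_simps)
  have lower: "(fact (n - k) :: real) = (real n - real k) * fact (n - Suc k)"
    using assms by (simp add: Suc_diff_Suc[symmetric] of_nat_diff)
  have "real n - real k > 0" "real n + real k + 1 > 0"
    using assms by auto
  then show ?thesis
    unfolding binom_ratio_def upper lower by simp
qed

lemma binom_ratio_Suc_le:
  assumes "k < n"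
  shows "binom_ratio n (Suc k) \<le> binom_ratio n k"
proof -
  have "binom_ratio n (Suc k) * (real n + real k + 1) \<le> binom_ratio n k * (real n + real k + 1)"
    using binom_ratio_Suc[OF assms] binom_ratio_pos[of n k] by (simp add: mult_right_mono)
  then show ?thesis by simp
qed

lemma binom_ratio_Suc_left:
  assumes "k \<le> n"
  shows "binom_ratio (Suc n) k * (real (Suc n) ^ 2 - real k ^ 2) = real (Suc n) ^ 2 * binom_ratio n k"
proof -
  have top: "(fact (Suc n) :: real) = (real n + 1) * fact n"
    by (simp add: algebra_simps)
  have upper: "(fact (Suc n + k) :: real) = (real n + real k + 1) * fact (n + k)"
    by (simp add: algebra_simps)
  have lower: "(fact (Suc n - k) :: real) = (real n - real k + 1) * fact (n - k)"
    using assms by (simp add: Suc_diff_le of_nat_diff algebra_simps)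
  have factor: "real (Suc n) ^ 2 - real k ^ 2 = (real n + real k + 1) * (real n - real k + 1)"
    by (simp add: power2_eq_square algebra_simps)
  have "real n - real k + 1 > 0" "real n + real k + 1 > 0"
    using assms by auto
  then show ?thesis
    unfolding binom_ratio_def top upper lower factor by (simp add: power_mult_distrib)
qed

lemma sum_mult_binom_ratio_partial:
  assumes "m \<le> N"
  shows "(\<Sum>k=1..m. real k * binom_ratio N k) = real N / 2 - (real N - real m) * binom_ratio N m / 2"
  using assms
proof (induction m)
  case 0 then show ?case by simp
next
  case (Suc m)
  then have "(real N - real m) * binom_ratio N m = binom_ratio N (Suc m) * (real N + real m + 1)"
    by (simp add: binom_ratio_Suc)
  with Suc show ?case
    by (simp add: field_simps)
qed

lemma sum_alternating_mult_binom_ratio_partial: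
  assumes "m \<le> N"
  shows "(\<Sum>k=1..m. (-1)^(k+1) * real k * binom_ratio N k)
     = (real N - (-1)^m * (2 * real m + 1) * ((real N - real m) * binom_ratio N m)) / (2 * (2 * real N - 1))"
  using assms
proof (induction m)
  case 0 then show ?case by simp
next
  case (Suc m)
  then have "(real N - real m) * binom_ratio N m = binom_ratio N (Suc m) * (real N + real m + 1)"
    by (simp add: binom_ratio_Suc)
  moreover have "2 * real N - 1 \<noteq> 0"
    using Suc by simp
  ultimately show ?case
    using Suc by (simp add: field_simps)
qed

lemma sum_binom_ratio_Suc_left:
  fixes w :: "nat \<Rightarrow> real"
  shows "(\<Sum>k=1..Suc n. w k * binom_ratio (Suc n) k / real k)
       = (\<Sum>k=1..n. w k * binom_ratio n k / real k)
         + (\<Sum>k=1..Suc n. w k * real k * binom_ratio (Suc n) k) / real (Suc n) ^ 2"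
proof -
  have cancel: "c * b / x = c * a / x + c * x * b / M^2"
    if "M > 0" "x > 0" "b * (M^2 - x^2) = M^2 * a" for c M x a b :: real
  proof -
    have "c * (b * (M^2 - x^2)) = c * (M^2 * a)"
      using that(3) by simp
    with that(1,2) show ?thesis
      by (simp add: field_simps power2_eq_square)
  qed
  have "(\<Sum>k=1..n. w k * binom_ratio (Suc n) k / real k)
      = (\<Sum>k=1..n. w k * binom_ratio n k / real k
           + w k * real k * binom_ratio (Suc n) k / real (Suc n) ^ 2)"
    by (intro sum.cong refl cancel binom_ratio_Suc_left) auto
  moreover have "w (Suc n) * binom_ratio (Suc n) (Suc n) / real (Suc n)
      = w (Suc n) * real (Suc n) * binom_ratio (Suc n) (Suc n) / real (Suc n) ^ 2"
    by (simp add: power2_eq_square)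
  ultimately show ?thesis
    by (simp add: sum.distrib sum_divide_distrib add_divide_distrib)
qed

lemma sum_binom_ratio_div_eq_harm: "(\<Sum>k=1..n. binom_ratio n k / real k) = harm n / 2"
proof (induction n)
  case 0 then show ?case by (simp add: harm_def)
next
  case (Suc n)
  define u where "u = real (Suc n)"
  have closed: "(\<Sum>k=1..Suc n. real k * binom_ratio (Suc n) k) = u / 2"
    using sum_mult_binom_ratio_partial[of "Suc n" "Suc n"] by (simp add: u_def)
  have "u > 0"
    by (simp add: u_def)
  then have "(\<Sum>k=1..Suc n. real k * binom_ratio (Suc n) k) / u^2 = 1 / u / 2"
    unfolding closed by (simp add: power2_eq_square)
  then show ?case
    using Suc sum_binom_ratio_Suc_left[of "\<lambda>_. 1" n]
    by (simp add: harm_Suc u_def inverse_eq_divide add_divide_distrib)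
qed

lemma sum_alternating_binom_ratio_div_eq_harm:
  "(\<Sum>k=1..n. (-1)^(k+1) * binom_ratio n k / real k) = harm (2*n) - harm n"
proof (induction n)
  case 0 then show ?case by (simp add: harm_def)
next
  case (Suc n)
  define u where "u = real (Suc n)"
  have closed: "(\<Sum>k=1..Suc n. (-1)^(k+1) * real k * binom_ratio (Suc n) k) = u / (2 * (2 * u - 1))"
    using sum_alternating_mult_binom_ratio_partial[of "Suc n" "Suc n"] by (simp add: u_def)
  have "u \<ge> 1"
    by (simp add: u_def)
  then have "(\<Sum>k=1..Suc n. (-1)^(k+1) * real k * binom_ratio (Suc n) k) / u^2
      = 1 / (2 * u - 1) + 1 / (2 * u) - 1 / u"
    unfolding closed by (simp add: field_simps power2_eq_square)
  moreover have "harm (2 * Suc n) = (harm (2 * n) :: real) + 1 / (2 * u - 1) + 1 / (2 * u)"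
    by (simp add: harm_Suc u_def field_simps)
  ultimately show ?case
    using Suc sum_binom_ratio_Suc_left[of "\<lambda>k. (-1)^(k+1)" n]
    by (simp add: harm_Suc u_def inverse_eq_divide)
qed

lemma minus_one_power_nat_abs: "(-1::'a::ring_1) ^ nat \<bar>z\<bar> = (if even z then 1 else -1)"
  by (cases z rule: int_cases2) (simp_all add: minus_one_power_iff)

lemma p_of_nat:
  assumes "1 \<le> k" "k \<le> n"
  shows "p n (int k) = (-1)^(k+1) * binom_ratio n k / real k"
proof -
  have "nat \<bar>int k + 1\<bar> = k + 1" "nat (int n + int k) = n + k" "nat (int n - int k) = n - k"
    using assms by auto
  with assms show ?thesis
    unfolding p_def binom_ratio_def by simp
qed

lemma p_minus: "p n (- k) = - p n k"
proof -
  have "(-1::real) ^ nat \<bar>- k + 1\<bar> = (-1) ^ nat \<bar>k + 1\<bar>"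
    unfolding minus_one_power_nat_abs by simp
  then show ?thesis
    unfolding p_def by (simp add: mult.commute)
qed

lemma p_eq_binomial_ratio:
  assumes "i \<le> 2 * n" "i \<noteq> n"
  shows "p n (int i - int n)
       = (-1)^(i+n+1) * (real (2*n choose i) / real (2*n choose n)) / (real i - real n)"
proof -
  have sign: "(-1::real) ^ nat \<bar>int i - int n + 1\<bar> = (-1)^(i+n+1)"
  proof -
    have "even (int i - int n + 1) \<longleftrightarrow> even (i + n + 1)"
      by presburger
    then show ?thesis
      unfolding minus_one_power_nat_abs by (simp add: minus_one_power_iff)
  qed
  have upper: "nat (int n + (int i - int n)) = i" and lower: "nat (int n - (int i - int n)) = 2 * n - i"
    using assms by auto
  have "real (2*n choose i) / real (2*n choose n)
      = (fact (2*n) / (fact i * fact (2*n - i))) / (fact (2*n) / (fact n * fact n))"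
    using assms binomial_fact[of n "2*n", where 'a=real] by (simp add: binomial_fact mult_2)
  also have "\<dots> = fact n ^ 2 / (fact i * fact (2*n - i))"
    by (simp add: power2_eq_square)
  finally have ratio: "real (2*n choose i) / real (2*n choose n) = fact n ^ 2 / (fact i * fact (2*n - i))" .
  from assms show ?thesis
    unfolding p_def sign upper lower ratio by (simp add: mult_ac)
qed

lemma sum_p: "(\<Sum>k = -int n..int n. p n k) = 0"
proof -
  have "(\<Sum>k = -int n..int n. p n k) = (\<Sum>k = -int n..int n. p n (- k))"
    by (rule sum.reindex_bij_witness[where i=uminus and j=uminus]) auto
  then show ?thesis
    by (simp add: p_minus sum_negf)
qed

lemma sum_p_mult_power:
  assumes "1 \<le> j" "j \<le> 2 * n"
  shows "(\<Sum>k = -int n..int n. p n k * real_of_int k ^ j) = (if j = 1 then 1 else 0)"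
proof -
  define c where "c = (-1::real)^(n+1) / real (2*n choose n)"
  have summand: "p n (int i - int n) * real_of_int (int i - int n) ^ j
      = c * ((-1)^i * real (2*n choose i) * (- real n + real i)^(j-1))
        + (if j = 1 \<and> i = n then 1 else 0)"
    if "i \<le> 2 * n" for i
  proof (cases "i = n")
    case True
    then show ?thesis using assms by (simp add: p_def c_def)
  next
    case False
    have "(real i - real n)^j = (real i - real n) * (real i - real n)^(j-1)"
      using assms by (simp add: power_eq_if)
    then have "p n (int i - int n) * real_of_int (int i - int n) ^ j
        = (-1)^(i+n+1) * (real (2*n choose i) / real (2*n choose n)) / (real i - real n)
          * ((real i - real n) * (real i - real n)^(j-1))"
      using p_eq_binomial_ratio[OF that False] by simp
    also have "\<dots> = c * ((-1)^i * real (2*n choose i) * (- real n + real i)^(j-1))"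
      using False unfolding c_def by (simp add: power_add field_simps)
    finally show ?thesis
      using False by simp
  qed
  have "(\<Sum>k = -int n..int n. p n k * real_of_int k ^ j)
      = (\<Sum>i\<le>2*n. p n (int i - int n) * real_of_int (int i - int n) ^ j)"
    by (rule sum.reindex_bij_witness[where i="\<lambda>i. int i - int n" and j="\<lambda>k. nat (k + int n)"]) auto
  also have "\<dots> = (\<Sum>i\<le>2*n. c * ((-1)^i * real (2*n choose i) * (- real n + real i)^(j-1))
      + (if j = 1 \<and> i = n then 1 else 0))"
    by (intro sum.cong refl summand) simp
  also have "\<dots> = c * (\<Sum>i\<le>2*n. (-1)^i * real (2*n choose i) * (- real n + real i)^(j-1))
      + (if j = 1 then 1 else 0)"
    by (simp add: sum.distrib sum_distrib_left)
  also have "(\<Sum>i\<le>2*n. (-1)^i * real (2*n choose i) * (- real n + real i)^(j-1)) = 0"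
    using assms by (intro sum_alternating_binomial_power) simp
  finally show ?thesis by simp
qed

lemma p_alternating_eq:
  assumes "1 \<le> k" "k \<le> int n"
  shows "(-1) ^ nat (k + 1) * p n k = binom_ratio n (nat k) / real_of_int k"
proof -
  define m where "m = nat k"
  have "k = int m" "1 \<le> m" "m \<le> n"
    using assms by (auto simp: m_def)
  then show ?thesis
    by (simp add: p_of_nat nat_add_distrib power_add)
qed

lemma p_alternating_pos:
  "1 \<le> k \<Longrightarrow> k \<le> int n \<Longrightarrow> (-1) ^ nat (k + 1) * p n k > 0"
  by (simp add: p_alternating_eq binom_ratio_pos)

lemma p_alternating_decreasing:
  assumes "1 \<le> k" "k < int n"
  shows "(-1) ^ nat (k + 2) * p n (k + 1) \<le> (-1) ^ nat (k + 1) * p n k"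
proof -
  have "binom_ratio n (Suc (nat k)) \<le> binom_ratio n (nat k)"
    using assms by (intro binom_ratio_Suc_le) linarith
  then have "binom_ratio n (nat (k + 1)) / real_of_int (k + 1) \<le> binom_ratio n (nat k) / real_of_int k"
    using assms binom_ratio_pos[of n "Suc (nat k)"]
    by (intro frac_le) (simp_all add: Suc_nat_eq_nat_zadd1 add.commute)
  with assms show ?thesis
    using p_alternating_eq[of "k + 1" n] p_alternating_eq[of k n] by (simp add: add.assoc)
qed

lemma sum_int_atLeastAtMost_1: "(\<Sum>k = 1..int n. f k) = (\<Sum>k = 1..n. f (int k))"
proof -
  have "{1..int n} = int ` {1..n}"
    by (simp add: image_int_atLeastAtMost)
  then show ?thesis
    by (simp add: sum.reindex)
qed

lemma sum_abs_p: "(\<Sum>k = 1..int n. \<bar>p n k\<bar>) = harm n / 2"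
proof -
  have "(\<Sum>k = 1..int n. \<bar>p n k\<bar>) = (\<Sum>k = 1..n. binom_ratio n k / real k)"
    unfolding sum_int_atLeastAtMost_1
    by (intro sum.cong) (auto simp: p_of_nat abs_mult binom_ratio_pos less_imp_le)
  also have "\<dots> = harm n / 2"
    by (rule sum_binom_ratio_div_eq_harm)
  finally show ?thesis .
qed

lemma sum_p_atLeast_1: "(\<Sum>k = 1..int n. p n k) = harm (2 * n) - harm n"
proof -
  have "(\<Sum>k = 1..int n. p n k) = (\<Sum>k = 1..n. (-1)^(k+1) * binom_ratio n k / real k)"
    unfolding sum_int_atLeastAtMost_1 by (intro sum.cong) (auto simp: p_of_nat)
  also have "\<dots> = harm (2 * n) - harm n"
    by (rule sum_alternating_binom_ratio_div_eq_harm)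
  finally show ?thesis .
qed

theorem mainTheorem1:
  fixes n :: nat
  shows "(\<forall>k::int. 1 \<le> k \<and> k \<le> int n \<longrightarrow> (-1) ^ nat (k + 1) * p n k > 0)
       \<and> (\<forall>k::int. 1 \<le> k \<and> k < int n \<longrightarrow>
              (-1) ^ nat (k + 2) * p n (k + 1) \<le> (-1) ^ nat (k + 1) * p n k)
       \<and> (\<forall>k::int. 1 \<le> k \<and> k \<le> int n \<longrightarrow> p n (-k) = - p n k)
       \<and> (\<forall>j::nat. j \<le> 2 * n \<longrightarrow>
              (\<Sum>k = -int n..int n. p n k * (real_of_int k) ^ j) = (if j = 1 then 1 else 0))
       \<and> (\<Sum>k = 1..int n. \<bar>p n k\<bar>) = harm n / 2
       \<and> (\<Sum>k = 1..int n. p n k) = harm (2 * n) - harm n"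
proof (intro conjI allI impI)
  fix j :: nat
  assume "j \<le> 2 * n"
  then show "(\<Sum>k = -int n..int n. p n k * (real_of_int k) ^ j) = (if j = 1 then 1 else 0)"
    using sum_p sum_p_mult_power[of j n] by (cases "j = 0") auto
qed (simp_all add: p_alternating_pos p_alternating_decreasing p_minus sum_abs_p sum_p_atLeast_1)

end
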